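(* The multi-observation inverse optimization model $\mathbf{IO}(\mathbf{X})$ is feasible.
   Context: Forward problem $\mathbf{FO}(\mathbf{c})$: maximize $\mathbf{c}'\mathbf{x}$ subject to $\mathbf{A}\mathbf{x}\ge\mathbf{b}$ (relevant constraints, $\mathbf{A}\in\mathbb{R}^{m_1\times n}$, $m_1\ge1$, rows $\mathbf{a}_j$), $\mathbf{W}\mathbf{x}\ge\mathbf{q}$ (trivial constraints), $\mathbf{x}\in\mathbb{R}^n$. Its feasible region $\chi$ is assumed nonempty, full-dimensional and free of redundant constraints. Given observations $\mathbf{X}=\{\mathbf{x}^k\in\mathbb{R}^n: k\in\mathcal{K}=\{1,\dots,K\}\}$ (feasible or infeasible), the multi-observation inverse optimization model is $\mathbf{IO}(\mathbf{X})$: minimize over $\mathbf{c},\mathbf{y},\mathbf{E},\mathbf{z}$ the distance measure $\mathscr{D}(\mathbf{E},\mathbf{A})\ge 0$ subject to $\mathbf{A}\mathbf{z}\ge\mathbf{b}$, $\mathbf{W}\mathbf{z}\ge\mathbf{q}$, $\mathbf{c}'\mathbf{z}=\mathbf{b}'\mathbf{y}$, $\mathbf{z}=\mathbf{x}^k-\epsilon^k$ for all $k\in\mathcal{K}$, $\mathbf{A}'\mathbf{y}=\mathbf{c}$, $\|\mathbf{c}\|_L=1$, $\mathbf{y}\ge\mathbf{0}$, with $\mathbf{c},\mathbf{z}\in\mathbb{R}^n$, $\mathbf{y}\in\mathbb{R}^{m_1}$, $\mathbf{E}\in\mathbb{R}^{n\times K}$ whose $k$-th column is $\epsilon^k$.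 *)

theory Defs
  imports "HOL-Analysis.Analysis"
begin

text \<open>Feasible region chi of FO: A x >= b (relevant, rows indexed by 'm),
  W x >= q (trivial, rows indexed by 'p), componentwise.\<close>
definition feasible_region ::
  "real^'n^'m \<Rightarrow> real^'m \<Rightarrow> real^'n^'p \<Rightarrow> real^'p \<Rightarrow> (real^'n) set" where
  "feasible_region A b W q =
     {x. (\<forall>i. (A *v x)$i \<ge> b$i) \<and> (\<forall>l. (W *v x)$l \<ge> q$l)}"

definition region_without_relevant ::
  "real^'n^'m \<Rightarrow> real^'m \<Rightarrow> real^'n^'p \<Rightarrow> real^'p \<Rightarrow> 'm \<Rightarrow> (real^'n) set" where
  "region_without_relevant A b W q j =
     {x. (\<forall>i. i \<noteq> j \<longrightarrow> (A *v x)$i \<ge> b$i) \<and> (\<forall>l. (W *v x)$l \<ge> q$l)}"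

definition region_without_trivial ::
  "real^'n^'m \<Rightarrow> real^'m \<Rightarrow> real^'n^'p \<Rightarrow> real^'p \<Rightarrow> 'p \<Rightarrow> (real^'n) set" where
  "region_without_trivial A b W q l0 =
     {x. (\<forall>i. (A *v x)$i \<ge> b$i) \<and> (\<forall>l. l \<noteq> l0 \<longrightarrow> (W *v x)$l \<ge> q$l)}"

definition no_redundant_constraints ::
  "real^'n^'m \<Rightarrow> real^'m \<Rightarrow> real^'n^'p \<Rightarrow> real^'p \<Rightarrow> bool" where
  "no_redundant_constraints A b W q \<longleftrightarrow>
     (\<forall>j. region_without_relevant A b W q j \<noteq> feasible_region A b W q) \<and>
     (\<forall>l. region_without_trivial A b W q l \<noteq> feasible_region A b W q)"

definition is_norm :: "(real^'n \<Rightarrow> real) \<Rightarrow> bool" where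
  "is_norm N \<longleftrightarrow>
     (\<forall>x. N x \<ge> 0) \<and> (\<forall>x. N x = 0 \<longleftrightarrow> x = 0) \<and>
     (\<forall>a x. N (a *\<^sub>R x) = \<bar>a\<bar> * N x) \<and> (\<forall>x y. N (x + y) \<le> N x + N y)"

text \<open>Feasibility of IO(X): existence of (c, y, E, z) satisfying all constraints.
  X k is the k-th observation; E has the epsilons as columns.\<close>
definition IO_feasible ::
  "real^'n^'m \<Rightarrow> real^'m \<Rightarrow> real^'n^'p \<Rightarrow> real^'p \<Rightarrow> (real^'n \<Rightarrow> real)
     \<Rightarrow> ('k::finite \<Rightarrow> real^'n) \<Rightarrow> bool" where
  "IO_feasible A b W q N X \<longleftrightarrow>
     (\<exists>(c::real^'n) (y::real^'m) (E::real^'k^'n) (z::real^'n).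
        (\<forall>i. (A *v z)$i \<ge> b$i) \<and>
        (\<forall>l. (W *v z)$l \<ge> q$l) \<and>
        c \<bullet> z = b \<bullet> y \<and>
        (\<forall>k. z = X k - column k E) \<and>
        transpose A *v y = c \<and>
        N c = 1 \<and>
        (\<forall>i. y$i \<ge> 0))"

end

theory Submission
  imports Defs
begin

text \<open>Pick any relevant constraint \<open>j\<close>. Since it is not redundant, some point \<open>x\<^sub>2\<close> satisfies
  all other constraints but violates \<open>a\<^sub>j x \<ge> b\<^sub>j\<close>; moving along the segment from a feasible
  point to \<open>x\<^sub>2\<close> inside the convex region defined by the other constraints, one meets a feasible
  point \<open>z\<close> with \<open>a\<^sub>j z = b\<^sub>j\<close>, and \<open>a\<^sub>j \<noteq> 0\<close>. Then \<open>c = a\<^sub>j / \<parallel>a\<^sub>j\<parallel>\<^sub>L\<close>, \<open>y = e\<^sub>j / \<parallel>a\<^sub>j\<parallel>\<^sub>L\<close>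
  and \<open>\<epsilon>\<^sup>k = x\<^sup>k - z\<close> solve \<open>IO(X)\<close>.\<close>

lemma region_without_relevant_eq_Inter:
  "region_without_relevant A b W q j =
     (\<Inter>i\<in>-{j}. {x. b$i \<le> A$i \<bullet> x}) \<inter> (\<Inter>l. {x. q$l \<le> W$l \<bullet> x})"
  by (auto simp: region_without_relevant_def matrix_vector_mul_component)

lemma convex_region_without_relevant: "convex (region_without_relevant A b W q j)"
  unfolding region_without_relevant_eq_Inter
  by (intro convex_Int convex_INT convex_halfspace_ge)

lemma feasible_region_eq_region_without_relevant_Int:
  "feasible_region A b W q = region_without_relevant A b W q j \<inter> {x. b$j \<le> A$j \<bullet> x}"
  by (auto simp: feasible_region_def region_without_relevant_def matrix_vector_mul_component)

lemma nonredundant_relevant_constraint_violated: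
  assumes "no_redundant_constraints A b W q"
  obtains x where "x \<in> region_without_relevant A b W q j" "A$j \<bullet> x < b$j"
proof -
  have "region_without_relevant A b W q j \<noteq> feasible_region A b W q"
    using assms unfolding no_redundant_constraints_def by blast
  then have "\<exists>x \<in> region_without_relevant A b W q j. \<not> b$j \<le> A$j \<bullet> x"
    unfolding feasible_region_eq_region_without_relevant_Int[of A b W q j] by blast
  then show thesis
    using that by (auto simp: not_le)
qed

lemma nonredundant_relevant_constraint_active:
  assumes "no_redundant_constraints A b W q" and "feasible_region A b W q \<noteq> {}"
  shows "A$j \<noteq> 0" and "\<exists>z \<in> feasible_region A b W q. A$j \<bullet> z = b$j"
proof -
  obtain x\<^sub>1 where x\<^sub>1: "x\<^sub>1 \<in> feasible_region A b W q"
    using assms(2) by blast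
  then have x\<^sub>1_without: "x\<^sub>1 \<in> region_without_relevant A b W q j" and x\<^sub>1_j: "b$j \<le> A$j \<bullet> x\<^sub>1"
    unfolding feasible_region_eq_region_without_relevant_Int[of A b W q j] by auto
  obtain x\<^sub>2 where x\<^sub>2_without: "x\<^sub>2 \<in> region_without_relevant A b W q j" and x\<^sub>2_j: "A$j \<bullet> x\<^sub>2 < b$j"
    using nonredundant_relevant_constraint_violated[OF assms(1)] .
  show "A$j \<noteq> 0"
    using x\<^sub>1_j x\<^sub>2_j by auto
  obtain z where "z \<in> region_without_relevant A b W q j" "A$j \<bullet> z = b$j"
    using connected_ivt_hyperplane[OF convex_connected[OF convex_region_without_relevant]
        x\<^sub>2_without x\<^sub>1_without, of "A$j" "b$j"] x\<^sub>1_j x\<^sub>2_j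
    by auto
  then show "\<exists>z \<in> feasible_region A b W q. A$j \<bullet> z = b$j"
    unfolding feasible_region_eq_region_without_relevant_Int[of A b W q j] by auto
qed

lemma IO_feasible_if_active_constraint:
  fixes A :: "real^'n^'m" and X :: "'k::finite \<Rightarrow> real^'n"
  assumes N: "is_norm N"
    and z: "z \<in> feasible_region A b W q" and active: "A$j \<bullet> z = b$j" and row: "A$j \<noteq> 0"
  shows "IO_feasible A b W q N X"
proof -
  have N_row: "N (A$j) > 0"
    using N row unfolding is_norm_def by (metis order_less_le)
  define c where "c = (1 / N (A$j)) *\<^sub>R A$j"
  define y :: "real^'m" where "y = (1 / N (A$j)) *\<^sub>R axis j 1"
  define E :: "real^'k^'n" where "E = (\<chi> i k. (X k - z)$i)"
  have "N c = 1"
    using N N_row row unfolding is_norm_def c_def by simp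
  moreover have "transpose A *v y = c"
    by (simp add: y_def c_def matrix_vector_mult_scaleR matrix_vector_mult_basis row_def)
  moreover have "c \<bullet> z = b \<bullet> y"
    using active by (simp add: c_def y_def inner_axis)
  moreover have "\<forall>k. z = X k - column k E"
    by (simp add: E_def column_def vec_eq_iff)
  moreover have "\<forall>i. y$i \<ge> 0"
    using N_row by (simp add: y_def axis_def)
  ultimately show ?thesis
    using z unfolding IO_feasible_def feasible_region_def by blast
qed

theorem proposition2:
  fixes A :: "real^'n^'m" and b :: "real^'m"
    and W :: "real^'n^'p" and q :: "real^'p"
    and N :: "real^'n \<Rightarrow> real"
    and X :: "'k::finite \<Rightarrow> real^'n"
  assumes "is_norm N"
    and "feasible_region A b W q \<noteq> {}"
    and "interior (feasible_region A b W q) \<noteq> {}"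
    and "no_redundant_constraints A b W q"
  shows "IO_feasible A b W q N X"
proof -
  fix j :: 'm
  obtain z where "z \<in> feasible_region A b W q" "A$j \<bullet> z = b$j"
    using nonredundant_relevant_constraint_active(2)[OF assms(4,2)] by blast
  moreover have "A$j \<noteq> 0"
    using nonredundant_relevant_constraint_active(1)[OF assms(4,2)] .
  ultimately show ?thesis
    by (rule IO_feasible_if_active_constraint[OF assms(1)])
qed

end
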